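(* Assume the payoffs are normalized with $T=1$, $S=0$. Assume X uses a memory-one strategy $\mathbf p$ whose X Press-Dyson vector is $\mathbf p-(1,1,0,0)=\gamma(\bar\alpha\mathbf S_X+\bar\beta\mathbf S_Y+\mathbf 1)$ with $\gamma>0$. Let $-Z^{-1}=\bar\alpha+\bar\beta$, so that $P\le Z\le R$. Then for any strategy pattern played by Y and any associated limit distribution, $$\bar\alpha Z(s_X-s_Y)=s_Y-Z.$$ Furthermore, with $\kappa=\bar\alpha Z/(1+\bar\alpha Z)$ one has $\kappa<1$, $\kappa$ has the same sign as $\bar\alpha$, and for any strategy pattern played by Y and any associated limit distribution, $$\kappa(s_X-Z)=s_Y-Z.$$
   Context: Iterated Prisoner's Dilemma with normalized payoffs $T=1>R>P>S=0$ and $2R>1$; outcomes ordered $cc,cd,dc,dd$ (first letter X's play, second Y's; $c$ = cooperate, $d$ = defect); payoff vectors $\mathbf S_X=(R,0,1,P)$, $\mathbf S_Y=(R,1,0,P)$, $\mathbf 1=(1,1,1,1)$. A memory-one strategy for X is $\mathbf p\in[0,1]^4$, $p_i$ the probability X plays $c$ after outcome $i$ of the previous round. A strategy pattern for Y is any (possibly randomized, history-dependent) rule for Y's play. With $\mathbf v^n$ the distribution of the outcome of round $n$, a limit distribution is any limit point $\mathbf v$ of the Cesàro averages $\frac1n\sum_{k\le n}\mathbf v^k$, with expected payoffs $s_X=\langle\mathbf v\cdot\mathbf S_X\rangle$, $s_Y=\langle\mathbf v\cdot\mathbf S_Y\rangle$. *)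

theory Defs
  imports Complex_Main
begin

text \<open>Outcomes of one round: (X cooperates?, Y cooperates?).
  cc = (True,True), cd = (True,False), dc = (False,True), dd = (False,False).
  Vectors indexed by outcomes are functions outcome => real.\<close>
type_synonym outcome = "bool \<times> bool"

definition SX :: "real \<Rightarrow> real \<Rightarrow> outcome \<Rightarrow> real" where
  "SX R P w = (case w of (True, True) \<Rightarrow> R | (True, False) \<Rightarrow> 0
                         | (False, True) \<Rightarrow> 1 | (False, False) \<Rightarrow> P)"

definition SY :: "real \<Rightarrow> real \<Rightarrow> outcome \<Rightarrow> real" where
  "SY R P w = (case w of (True, True) \<Rightarrow> R | (True, False) \<Rightarrow> 1
                         | (False, True) \<Rightarrow> 0 | (False, False) \<Rightarrow> P)"

definition e12 :: "outcome \<Rightarrow> real" where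
  "e12 w = (if fst w then 1 else 0)"

definition memory_one :: "(outcome \<Rightarrow> real) \<Rightarrow> bool" where
  "memory_one p \<longleftrightarrow> (\<forall>w. 0 \<le> p w \<and> p w \<le> 1)"

text \<open>A strategy pattern for Y: probability that Y cooperates given the full history
  of previous outcomes (a behavioural, history-dependent, randomized rule).\<close>
definition strategy_pattern :: "(outcome list \<Rightarrow> real) \<Rightarrow> bool" where
  "strategy_pattern q \<longleftrightarrow> (\<forall>h. 0 \<le> q h \<and> q h \<le> 1)"

definition x_coop :: "(outcome \<Rightarrow> real) \<Rightarrow> real \<Rightarrow> outcome list \<Rightarrow> real" where
  "x_coop p p0 h = (if h = [] then p0 else p (last h))"

definition step_prob :: "(outcome \<Rightarrow> real) \<Rightarrow> real \<Rightarrow> (outcome list \<Rightarrow> real)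
    \<Rightarrow> outcome list \<Rightarrow> outcome \<Rightarrow> real" where
  "step_prob p p0 q h w =
     (if fst w then x_coop p p0 h else 1 - x_coop p p0 h) *
     (if snd w then q h else 1 - q h)"

definition hist_prob :: "(outcome \<Rightarrow> real) \<Rightarrow> real \<Rightarrow> (outcome list \<Rightarrow> real)
    \<Rightarrow> outcome list \<Rightarrow> real" where
  "hist_prob p p0 q h = (\<Prod>i<length h. step_prob p p0 q (take i h) (h ! i))"

text \<open>v^(n+1): distribution of the outcome of round n+1 (rounds counted from 0 here).\<close>
definition round_dist :: "(outcome \<Rightarrow> real) \<Rightarrow> real \<Rightarrow> (outcome list \<Rightarrow> real)
    \<Rightarrow> nat \<Rightarrow> outcome \<Rightarrow> real" where
  "round_dist p p0 q n w =
     (\<Sum>h\<in>{h. length h = Suc n}. if last h = w then hist_prob p p0 q h else 0)"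

definition cesaro :: "(outcome \<Rightarrow> real) \<Rightarrow> real \<Rightarrow> (outcome list \<Rightarrow> real)
    \<Rightarrow> nat \<Rightarrow> outcome \<Rightarrow> real" where
  "cesaro p p0 q n w = (\<Sum>k<n. round_dist p p0 q k w) / real n"

definition limit_dist :: "(outcome \<Rightarrow> real) \<Rightarrow> real \<Rightarrow> (outcome list \<Rightarrow> real)
    \<Rightarrow> (outcome \<Rightarrow> real) \<Rightarrow> bool" where
  "limit_dist p p0 q v \<longleftrightarrow>
     (\<exists>r::nat \<Rightarrow> nat. strict_mono r \<and> (\<forall>w. (\<lambda>n. cesaro p p0 q (r n) w) \<longlonglongrightarrow> v w))"

definition payoff :: "(outcome \<Rightarrow> real) \<Rightarrow> (outcome \<Rightarrow> real) \<Rightarrow> real" where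
  "payoff v S = (\<Sum>w\<in>UNIV. v w * S w)"

end

theory Submission
  imports Defs
begin

text \<open>Akin's lemma: X's probability of cooperating in round n+1 is the expected value of
  p in round n, so the expectations of p - e12 under the round distributions telescope
  and their Cesaro means vanish; hence every limit distribution v is orthogonal to the
  Press-Dyson vector p - e12. With p - e12 = \<gamma>(\<alpha> SX + \<beta> SY + 1) this is the linear
  relation \<alpha> sX + \<beta> sY + 1 = 0, which is rewritten using (\<alpha> + \<beta>) Z = -1. The
  bounds P \<le> Z \<le> R and 1 + \<alpha> Z > 0 come from 0 \<le> p \<le> 1 at the outcomes cc, dc, dd.\<close>

lemma sum_UNIV_outcome:
  "(\<Sum>w\<in>UNIV. f w) = f (True,True) + f (True,False) + f (False,True) + f (False,False)"
  for f :: "outcome \<Rightarrow> 'a::comm_monoid_add"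
proof -
  have UNIV_outcome: "(UNIV::outcome set) = {(True,True),(True,False),(False,True),(False,False)}"
    by (auto simp: UNIV_bool)
  show ?thesis by (subst UNIV_outcome) (simp add: add.assoc)
qed

lemma sum_lists_length_Suc:
  "(\<Sum>h\<in>{h. length h = Suc n}. f h) = (\<Sum>h\<in>{h. length h = n}. \<Sum>w\<in>UNIV. f (h @ [w]))"
  for f :: "'a::finite list \<Rightarrow> 'b::comm_monoid_add"
proof -
  have snoc_image: "{h::'a list. length h = Suc n} = (\<lambda>(h,w). h @ [w]) ` ({h. length h = n} \<times> UNIV)"
  proof (rule set_eqI, rule iffI)
    fix x :: "'a list" assume "x \<in> {h. length h = Suc n}"
    then have "x \<noteq> []" "length (butlast x) = n" by auto
    then show "x \<in> (\<lambda>(h,w). h @ [w]) ` ({h. length h = n} \<times> UNIV)"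
      by (intro image_eqI[of _ _ "(butlast x, last x)"]) auto
  qed auto
  have "inj_on (\<lambda>(h,w). h @ [w]) ({h::'a list. length h = n} \<times> UNIV)"
    by (auto simp: inj_on_def)
  then show ?thesis
    unfolding snoc_image
    by (simp add: sum.reindex sum.cartesian_product finite_list_length case_prod_unfold)
qed

lemma hist_prob_snoc: "hist_prob p p0 q (h @ [w]) = hist_prob p p0 q h * step_prob p p0 q h w"
proof -
  have "(\<Prod>i<length h. step_prob p p0 q (take i (h @ [w])) ((h @ [w]) ! i)) = hist_prob p p0 q h"
    unfolding hist_prob_def by (rule prod.cong) (auto simp: nth_append)
  then show ?thesis
    unfolding hist_prob_def[of _ _ _ "h @ [w]"] by simp
qed

lemma sum_step_prob: "(\<Sum>w\<in>UNIV. step_prob p p0 q h w) = 1"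
  by (simp add: sum_UNIV_outcome step_prob_def algebra_simps)

lemma sum_step_prob_e12: "(\<Sum>w\<in>UNIV. step_prob p p0 q h w * e12 w) = x_coop p p0 h"
  by (simp add: sum_UNIV_outcome step_prob_def e12_def algebra_simps)

lemma sum_hist_prob: "(\<Sum>h\<in>{h. length h = n}. hist_prob p p0 q h) = 1"
proof (induction n)
  case 0
  then show ?case by (simp add: hist_prob_def)
next
  case (Suc n)
  then show ?case
    by (simp add: sum_lists_length_Suc hist_prob_snoc sum_step_prob flip: sum_distrib_left)
qed

lemma hist_prob_nonneg:
  assumes "memory_one p" "0 \<le> p0" "p0 \<le> 1" "strategy_pattern q"
  shows "0 \<le> hist_prob p p0 q h"
proof -
  have "0 \<le> x_coop p p0 h'" "x_coop p p0 h' \<le> 1" for h'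
    using assms unfolding x_coop_def memory_one_def by (auto simp del: split_paired_All)
  moreover have "0 \<le> q h'" "q h' \<le> 1" for h'
    using assms unfolding strategy_pattern_def by auto
  ultimately have "0 \<le> step_prob p p0 q h' w" for h' w
    unfolding step_prob_def by simp
  then show ?thesis unfolding hist_prob_def by (simp add: prod_nonneg)
qed

lemma payoff_round_dist:
  "payoff (round_dist p p0 q n) g = (\<Sum>h\<in>{h. length h = Suc n}. hist_prob p p0 q h * g (last h))"
proof -
  have "payoff (round_dist p p0 q n) g
      = (\<Sum>w\<in>UNIV. \<Sum>h\<in>{h. length h = Suc n}. if last h = w then hist_prob p p0 q h * g w else 0)"
    unfolding payoff_def round_dist_def sum_distrib_right by (intro sum.cong) auto
  also have "\<dots> = (\<Sum>h\<in>{h. length h = Suc n}. \<Sum>w\<in>UNIV. if last h = w then hist_prob p p0 q h * g w else 0)"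
    by (rule sum.swap)
  finally show ?thesis by (simp add: sum.delta)
qed

lemma payoff_round_dist_one: "payoff (round_dist p p0 q n) (\<lambda>_. 1) = 1"
  by (simp add: payoff_round_dist sum_hist_prob)

lemma payoff_round_dist_Suc_e12:
  "payoff (round_dist p p0 q (Suc n)) e12 = payoff (round_dist p p0 q n) p"
proof -
  have "payoff (round_dist p p0 q (Suc n)) e12
      = (\<Sum>h\<in>{h. length h = Suc n}. hist_prob p p0 q h * (\<Sum>w\<in>UNIV. step_prob p p0 q h w * e12 w))"
    by (simp add: payoff_round_dist sum_lists_length_Suc[of _ "Suc n"] hist_prob_snoc
        sum_distrib_left mult.assoc)
  also have "\<dots> = (\<Sum>h\<in>{h. length h = Suc n}. hist_prob p p0 q h * p (last h))"
    by (intro sum.cong) (auto simp: sum_step_prob_e12 x_coop_def)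
  finally show ?thesis by (simp add: payoff_round_dist)
qed

lemma payoff_round_dist_e12_bounds:
  assumes "memory_one p" "0 \<le> p0" "p0 \<le> 1" "strategy_pattern q"
  shows "0 \<le> payoff (round_dist p p0 q n) e12" "payoff (round_dist p p0 q n) e12 \<le> 1"
proof -
  have nonneg: "0 \<le> hist_prob p p0 q h * e12 (last h)"
    and le: "hist_prob p p0 q h * e12 (last h) \<le> hist_prob p p0 q h" for h
    using hist_prob_nonneg[OF assms, of h] by (auto simp: e12_def)
  show "0 \<le> payoff (round_dist p p0 q n) e12"
    unfolding payoff_round_dist by (intro sum_nonneg nonneg)
  have "payoff (round_dist p p0 q n) e12 \<le> (\<Sum>h\<in>{h. length h = Suc n}. hist_prob p p0 q h)"
    unfolding payoff_round_dist by (intro sum_mono le)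
  then show "payoff (round_dist p p0 q n) e12 \<le> 1"
    by (simp only: sum_hist_prob)
qed

lemma payoff_cesaro:
  "payoff (cesaro p p0 q n) f = (\<Sum>k<n. payoff (round_dist p p0 q k) f) / real n"
  unfolding payoff_def cesaro_def
  by (simp add: sum_divide_distrib[symmetric] sum_distrib_right sum.swap[of _ "{..<n}"])

lemma limit_dist_payoff_eq:
  assumes "limit_dist p p0 q v" and "(\<lambda>n. payoff (cesaro p p0 q n) f) \<longlonglongrightarrow> c"
  shows "payoff v f = c"
proof -
  obtain r where r: "strict_mono r" "\<And>w. (\<lambda>n. cesaro p p0 q (r n) w) \<longlonglongrightarrow> v w"
    using assms(1) unfolding limit_dist_def by blast
  have "(\<lambda>n. payoff (cesaro p p0 q (r n)) f) \<longlonglongrightarrow> payoff v f"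
    unfolding payoff_def by (intro tendsto_sum tendsto_mult_right r(2))
  moreover have "(\<lambda>n. payoff (cesaro p p0 q (r n)) f) \<longlonglongrightarrow> c"
    using LIMSEQ_subseq_LIMSEQ[OF assms(2) r(1)] by (simp add: o_def)
  ultimately show ?thesis by (rule LIMSEQ_unique)
qed

lemma limit_dist_total:
  assumes "limit_dist p p0 q v"
  shows "payoff v (\<lambda>_. 1) = 1"
proof (rule limit_dist_payoff_eq[OF assms])
  \<comment> \<open>only eventually: the Cesaro mean at n = 0 divides by 0 and is 0\<close>
  have "\<forall>\<^sub>F n in sequentially. 1 = payoff (cesaro p p0 q n) (\<lambda>_. 1)"
    unfolding eventually_sequentially
    by (intro exI[of _ 1] allI impI) (simp add: payoff_cesaro payoff_round_dist_one)
  then show "(\<lambda>n. payoff (cesaro p p0 q n) (\<lambda>_. 1)) \<longlonglongrightarrow> 1"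
    by (rule Lim_transform_eventually[OF tendsto_const])
qed

lemma limit_dist_press_dyson:
  assumes "memory_one p" "0 \<le> p0" "p0 \<le> 1" "strategy_pattern q"
    and "limit_dist p p0 q v"
  shows "payoff v (\<lambda>w. p w - e12 w) = 0"
proof (rule limit_dist_payoff_eq[OF assms(5)])
  define c where "c k = payoff (round_dist p p0 q k) e12" for k
  have "payoff (round_dist p p0 q k) (\<lambda>w. p w - e12 w) = c (Suc k) - c k" for k
    by (simp only: c_def payoff_round_dist_Suc_e12)
      (simp add: payoff_def sum_subtractf right_diff_distrib)
  then have telescope: "payoff (cesaro p p0 q n) (\<lambda>w. p w - e12 w) = (c n - c 0) / real n" for n
    by (simp add: payoff_cesaro sum_lessThan_telescope)
  have lower: "-1 \<le> c n - c 0" and upper: "c n - c 0 \<le> 1" for n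
    using payoff_round_dist_e12_bounds[OF assms(1-4), of n]
      payoff_round_dist_e12_bounds[OF assms(1-4), of 0]
    unfolding c_def by linarith+
  have "\<forall>n. -1 / real n \<le> (c n - c 0) / real n" "\<forall>n. (c n - c 0) / real n \<le> 1 / real n"
    using divide_right_mono[OF lower] divide_right_mono[OF upper] by simp_all
  then have "(\<lambda>n. (c n - c 0) / real n) \<longlonglongrightarrow> 0"
    by (intro tendsto_sandwich[OF always_eventually always_eventually
          lim_const_over_n lim_const_over_n])
  then show "(\<lambda>n. payoff (cesaro p p0 q n) (\<lambda>w. p w - e12 w)) \<longlonglongrightarrow> 0"
    unfolding telescope .
qed

lemma limit_dist_zero_determinant:
  assumes "memory_one p" "0 \<le> p0" "p0 \<le> 1" "strategy_pattern q" "limit_dist p p0 q v"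
    and "\<gamma> \<noteq> 0"
    and "\<forall>w. p w - e12 w = \<gamma> * (\<alpha> * SX R P w + \<beta> * SY R P w + 1)"
  shows "\<alpha> * payoff v (SX R P) + \<beta> * payoff v (SY R P) + 1 = 0"
proof -
  have "payoff v (\<lambda>w. p w - e12 w)
      = \<gamma> * (\<alpha> * payoff v (SX R P) + \<beta> * payoff v (SY R P) + payoff v (\<lambda>_. 1))"
    using assms(7) by (simp add: payoff_def sum_UNIV_outcome SX_def SY_def algebra_simps)
  then show ?thesis
    using limit_dist_press_dyson[OF assms(1-5)] limit_dist_total[OF assms(5)] assms(6) by simp
qed

lemma press_dyson_coefficient_bounds:
  assumes "memory_one p" "\<gamma> > 0"
    and PD: "\<forall>w. p w - e12 w = \<gamma> * (\<alpha> * SX R P w + \<beta> * SY R P w + 1)"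
  shows "(\<alpha> + \<beta>) * R + 1 \<le> 0" "0 \<le> \<alpha> + 1" "0 \<le> (\<alpha> + \<beta>) * P + 1"
proof -
  have "p (True,True) \<le> 1" "0 \<le> p (False,True)" "0 \<le> p (False,False)"
    using assms(1) unfolding memory_one_def by auto
  moreover have "p (True,True) - 1 = \<gamma> * ((\<alpha> + \<beta>) * R + 1)"
    "p (False,True) = \<gamma> * (\<alpha> + 1)" "p (False,False) = \<gamma> * ((\<alpha> + \<beta>) * P + 1)"
    using PD by (auto simp: SX_def SY_def e12_def algebra_simps)
  ultimately have "\<gamma> * ((\<alpha> + \<beta>) * R + 1) \<le> 0" "0 \<le> \<gamma> * (\<alpha> + 1)"
    "0 \<le> \<gamma> * ((\<alpha> + \<beta>) * P + 1)"
    by linarith+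
  then show "(\<alpha> + \<beta>) * R + 1 \<le> 0" "0 \<le> \<alpha> + 1" "0 \<le> (\<alpha> + \<beta>) * P + 1"
    using \<open>\<gamma> > 0\<close> by (simp_all add: mult_le_0_iff zero_le_mult_iff)
qed

lemma zero_determinant_Z_bounds:
  fixes s Z :: real
  assumes "0 < R" "s * R + 1 \<le> 0" "0 \<le> s * P + 1" "- (1 / Z) = s"
  shows "P \<le> Z" "Z \<le> R" "0 < Z"
proof -
  have "s < 0" using assms(1,2) by (smt (verit) mult_nonneg_nonneg)
  then have sZ: "s * Z = -1" using assms(4) by (auto simp: field_simps)
  then have "s * Z \<le> s * P" "s * R \<le> s * Z" using assms(2,3) by linarith+
  then show "P \<le> Z" "Z \<le> R" using \<open>s < 0\<close> by (simp_all add: mult_le_cancel_left)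
  show "0 < Z" using sZ \<open>s < 0\<close> by (smt (verit) mult_nonpos_nonpos)
qed

lemma rescale_linear_relation:
  fixes \<alpha> \<beta> Z x y :: real
  assumes "(\<alpha> + \<beta>) * Z = -1" "\<alpha> * x + \<beta> * y + 1 = 0"
  shows "\<alpha> * Z * (x - y) = y - Z"
proof -
  have "\<alpha> * Z * (x - y) - (y - Z) = Z * (\<alpha> * x + \<beta> * y + 1) - y * ((\<alpha> + \<beta>) * Z + 1)"
    by (simp add: algebra_simps)
  also have "\<dots> = 0" using assms by simp
  finally show ?thesis by simp
qed

lemma kappa_relation:
  fixes a x y Z :: real
  assumes "0 < 1 + a" "a * (x - y) = y - Z"
  shows "a / (1 + a) * (x - Z) = y - Z"
  using assms by (simp add: field_simps)

lemma kappa_bounds: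
  fixes a :: real
  assumes "0 < 1 + a"
  shows "a / (1 + a) < 1" "sgn (a / (1 + a)) = sgn a"
  using assms by (simp_all add: divide_less_eq)

theorem proposition3p2:
  fixes R P :: real and p :: "outcome \<Rightarrow> real"
    and \<gamma> \<alpha> \<beta> Z :: real
  assumes payoffs: "0 < P" "P < R" "R < 1" "2 * R > 1"
    and mem1: "memory_one p"
    and gamma_pos: "\<gamma> > 0"
    and PD: "\<forall>w. p w - e12 w = \<gamma> * (\<alpha> * SX R P w + \<beta> * SY R P w + 1)"
    and Z_def: "- (1 / Z) = \<alpha> + \<beta>"
  shows "(P \<le> Z \<and> Z \<le> R) \<and>
         (\<forall>p0 q v. 0 \<le> p0 \<and> p0 \<le> 1 \<and> strategy_pattern q \<and> limit_dist p p0 q v \<longrightarrow>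
           \<alpha> * Z * (payoff v (SX R P) - payoff v (SY R P)) = payoff v (SY R P) - Z) \<and>
         \<alpha> * Z / (1 + \<alpha> * Z) < 1 \<and>
         sgn (\<alpha> * Z / (1 + \<alpha> * Z)) = sgn \<alpha> \<and>
         (\<forall>p0 q v. 0 \<le> p0 \<and> p0 \<le> 1 \<and> strategy_pattern q \<and> limit_dist p p0 q v \<longrightarrow>
           (\<alpha> * Z / (1 + \<alpha> * Z)) * (payoff v (SX R P) - Z) = payoff v (SY R P) - Z)"
proof -
  note coefficients = press_dyson_coefficient_bounds[OF mem1 gamma_pos PD]
  have "0 < R" using payoffs by linarith
  note Z_bounds = zero_determinant_Z_bounds[OF this coefficients(1,3) Z_def]
  have sum_Z: "(\<alpha> + \<beta>) * Z = -1"
    using Z_def Z_bounds(3) by (auto simp: field_simps)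
  have "- Z \<le> \<alpha> * Z"
    using mult_right_mono[of "-1" \<alpha> Z] coefficients(2) Z_bounds(3) by simp
  then have denominator: "0 < 1 + \<alpha> * Z" using Z_bounds(2) payoffs(3) by linarith
  have relation: "\<alpha> * Z * (payoff v (SX R P) - payoff v (SY R P)) = payoff v (SY R P) - Z"
    if "0 \<le> p0 \<and> p0 \<le> 1 \<and> strategy_pattern q \<and> limit_dist p p0 q v" for p0 q v
    using that gamma_pos
    by (intro rescale_linear_relation[OF sum_Z] limit_dist_zero_determinant[OF mem1 _ _ _ _ _ PD])
      auto
  have "sgn (\<alpha> * Z) = sgn \<alpha>" using Z_bounds(3) by (simp add: sgn_mult)
  then show ?thesis
    using Z_bounds(1,2) relation kappa_bounds[OF denominator] kappa_relation[OF denominator]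
    by auto
qed

end
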